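(* Let $\Theta=\{x_1,\dots,x_n\}$ be a finite frame of discernment and let $m$ be a basic probability assignment on $\Theta$ whose pignistic probabilities satisfy $\mathrm{BetP}(x)>0$ for every $x\in\Theta$. Fix a nonempty subset $B\subseteq\Theta$ with $|B|=g$. Then $$\sum_{A\in \mathrm{PES}(\Theta):\ \mathrm{Element}(A)=B} \mathrm{Sord}(A)=1,$$ i.e. the ordered support degrees of the $g!$ permutation events that are orderings of the elements of $B$ sum to $1$.
   Context: A basic probability assignment (BPA) on a finite set $\Theta$ is a map $m:2^{\Theta}\to[0,1]$ with $m(\emptyset)=0$ and $\sum_{A\subseteq\Theta}m(A)=1$. Its pignistic probability transformation is $\mathrm{BetP}(x)=\sum_{A\subseteq\Theta,\,x\in A} m(A)/|A|$ for $x\in\Theta$. The permutation event space $\mathrm{PES}(\Theta)$ is the set of all ordered tuples $A=(\beta_1,\dots,\beta_k)$ of distinct elements of $\Theta$, $0\le k\le n$ (permutation events); $|A|=k$ and $\mathrm{Element}(A)=\{\beta_1,\dots,\beta_k\}$ denotes the underlying unordered set. For a nonempty permutation event $A=(\beta_1,\dots,\beta_{|A|})$, its ordered support degree is $$\mathrm{Sord}(A)=\prod_{i=1}^{|A|}\frac{\mathrm{BetP}(\beta_i)}{\sum_{j=i}^{|A|}\mathrm{BetP}(\beta_j)}.$$ *)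

theory Defs
  imports "HOL-Analysis.Analysis"
begin

text \<open>A basic probability assignment on the frame Theta, given as a function on subsets;
  only its values on subsets of Theta are meaningful.\<close>
definition is_BPA :: "'a set \<Rightarrow> ('a set \<Rightarrow> real) \<Rightarrow> bool" where
  "is_BPA Theta m \<longleftrightarrow> m {} = 0 \<and> (\<forall>A\<in>Pow Theta. 0 \<le> m A \<and> m A \<le> 1)
     \<and> (\<Sum>A\<in>Pow Theta. m A) = 1"

definition BetP :: "'a set \<Rightarrow> ('a set \<Rightarrow> real) \<Rightarrow> 'a \<Rightarrow> real" where
  "BetP Theta m x = (\<Sum>A\<in>{A\<in>Pow Theta. x \<in> A}. m A / real (card A))"

definition PES :: "'a set \<Rightarrow> 'a list set" where
  "PES Theta = {xs. distinct xs \<and> set xs \<subseteq> Theta}"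

definition Element :: "'a list \<Rightarrow> 'a set" where
  "Element A = set A"

definition Sord :: "'a set \<Rightarrow> ('a set \<Rightarrow> real) \<Rightarrow> 'a list \<Rightarrow> real" where
  "Sord Theta m A = (\<Prod>i<length A. BetP Theta m (A ! i) /
       (\<Sum>j\<in>{i..<length A}. BetP Theta m (A ! j)))"

end

theory Submission
  imports Defs "HOL-Combinatorics.Multiset_Permutations"
begin

text \<open>
  Sord is the Plackett--Luce probability of a ranking under the weights BetP: the first
  element is drawn with probability proportional to its weight, then the second from the
  remaining ones, and so on. Summing over all rankings of B by conditioning on the first
  element, the inner sums are 1 by induction and the outer sum is the sum of the first-draw
  probabilities over B, which is 1 again.
\<close>

fun plackett_luce :: "('a \<Rightarrow> real) \<Rightarrow> 'a list \<Rightarrow> real" where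
  "plackett_luce p [] = 1"
| "plackett_luce p (x # xs) = p x / (p x + sum_list (map p xs)) * plackett_luce p xs"

lemma sum_nth_atLeastLessThan_eq_sum_list_drop:
  "(\<Sum>j=i..<length xs. f (xs ! j)) = sum_list (map f (drop i xs))"
proof (cases "i \<le> length xs")
  case True
  have "sum_list (map f (drop i xs)) = (\<Sum>j=0..<length xs - i. f (xs ! (j + i)))"
    using True by (simp add: sum_list_sum_nth add.commute)
  also have "\<dots> = (\<Sum>j=i..<length xs. f (xs ! j))"
    using True sum.shift_bounds_nat_ivl[of "\<lambda>j. f (xs ! j)" 0 i "length xs - i"] by simp
  finally show ?thesis ..
qed simp

lemma plackett_luce_eq_prod_drop:
  "plackett_luce p xs = (\<Prod>i<length xs. p (xs ! i) / sum_list (map p (drop i xs)))"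
  by (induction xs) (simp_all add: prod.lessThan_Suc_shift del: prod.lessThan_Suc)

lemma sum_plackett_luce_permutations_of_set:
  assumes "finite B" and "\<And>x. x \<in> B \<Longrightarrow> p x > 0"
  shows "(\<Sum>xs\<in>permutations_of_set B. plackett_luce p xs) = 1"
  using assms
proof (induction "card B" arbitrary: B)
  case 0
  then show ?case by simp
next
  case (Suc n)
  then have "B \<noteq> {}" by auto
  have first_draw: "(\<Sum>xs\<in>permutations_of_set (B - {x}). plackett_luce p (x # xs)) = p x / sum p B"
    if "x \<in> B" for x
  proof -
    have "(\<Sum>xs\<in>permutations_of_set (B - {x}). plackett_luce p (x # xs))
        = (\<Sum>xs\<in>permutations_of_set (B - {x}). p x / sum p B * plackett_luce p xs)"
    proof (intro sum.cong refl)
      fix xs assume "xs \<in> permutations_of_set (B - {x})"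
      then have "sum_list (map p xs) = sum p (B - {x})"
        by (simp add: permutations_of_set_def sum_list_distinct_conv_sum_set)
      then show "plackett_luce p (x # xs) = p x / sum p B * plackett_luce p xs"
        using \<open>x \<in> B\<close> \<open>finite B\<close> by (simp add: sum.remove)
    qed
    also have "\<dots> = p x / sum p B * (\<Sum>xs\<in>permutations_of_set (B - {x}). plackett_luce p xs)"
      by (simp add: sum_distrib_left)
    also have "(\<Sum>xs\<in>permutations_of_set (B - {x}). plackett_luce p xs) = 1"
      using Suc.hyps(1)[of "B - {x}"] Suc.hyps(2) Suc.prems that by simp
    finally show ?thesis
      by simp
  qed
  have "(\<Sum>xs\<in>permutations_of_set B. plackett_luce p xs)
      = (\<Sum>x\<in>B. \<Sum>xs\<in>(#) x ` permutations_of_set (B - {x}). plackett_luce p xs)"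
    unfolding permutations_of_set_nonempty[OF \<open>B \<noteq> {}\<close>]
    by (rule sum.UNION_disjoint) (use Suc.prems in auto)
  also have "\<dots> = (\<Sum>x\<in>B. p x / sum p B)"
    by (intro sum.cong refl) (simp add: sum.reindex first_draw del: plackett_luce.simps)
  also have "\<dots> = 1"
    using Suc.prems \<open>B \<noteq> {}\<close> sum_pos[of B p] by (simp add: sum_divide_distrib[symmetric])
  finally show ?case .
qed

lemma Sord_eq_plackett_luce: "Sord Theta m A = plackett_luce (BetP Theta m) A"
  by (simp only: Sord_def plackett_luce_eq_prod_drop sum_nth_atLeastLessThan_eq_sum_list_drop)

lemma PES_Element_eq_permutations_of_set:
  "B \<subseteq> Theta \<Longrightarrow> {A\<in>PES Theta. Element A = B} = permutations_of_set B"
  by (auto simp: PES_def Element_def permutations_of_set_def)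

theorem corollary1:
  fixes Theta :: "'a set" and m :: "'a set \<Rightarrow> real" and B :: "'a set"
  assumes "finite Theta"
    and "is_BPA Theta m"
    and "\<forall>x\<in>Theta. BetP Theta m x > 0"
    and "B \<subseteq> Theta" and "B \<noteq> {}"
  shows "(\<Sum>A\<in>{A\<in>PES Theta. Element A = B}. Sord Theta m A) = 1"
proof -
  have "finite B"
    using assms(1,4) finite_subset by blast
  moreover have "\<And>x. x \<in> B \<Longrightarrow> BetP Theta m x > 0"
    using assms(3,4) by blast
  ultimately show ?thesis
    unfolding PES_Element_eq_permutations_of_set[OF assms(4)] Sord_eq_plackett_luce
    by (rule sum_plackett_luce_permutations_of_set)
qed

end
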